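(* Let $\mathcal C$ be a finite commutative semigroup. Then $\mathsf D(\mathcal C)=\mathsf d(\mathcal C)+1\le|\mathcal C|$.
   Context: All semigroups are commutative, written additively, and have an identity element $0$; an empty sum equals $0$. For such $\mathcal C$, $\mathsf d(\mathcal C)$ is the smallest $d\in\mathbb N_0\cup\{\infty\}$ such that for all $n\in\mathbb N$ and $c_1,\dots,c_n\in\mathcal C$ there is $\Omega\subset[1,n]$ with $|\Omega|\le d$ and $\sum_{\nu=1}^n c_\nu=\sum_{\nu\in\Omega}c_\nu$. $\mathsf D(\mathcal C)$ is the smallest $\ell\in\mathbb N\cup\{\infty\}$ such that for all $n\ge\ell$ and $c_1,\dots,c_n\in\mathcal C$ there is a proper subset $\Omega\subsetneq[1,n]$ with $\sum_{\nu=1}^n c_\nu=\sum_{\nu\in\Omega}c_\nu$. *)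

theory Defs
  imports Main "HOL-Library.Extended_Nat"
begin

(* Commutative semigroups with identity 0, written additively: type class comm_monoid_add.
   C is a subset of such a structure (in the theorem: the whole finite type). *)

definition small_d :: "'a::comm_monoid_add set \<Rightarrow> enat" where
  "small_d C = Inf {d :: enat. \<forall>n::nat. n \<ge> 1 \<longrightarrow>
      (\<forall>c :: nat \<Rightarrow> 'a. (\<forall>\<nu>\<in>{1..n}. c \<nu> \<in> C) \<longrightarrow>
         (\<exists>\<Omega>. \<Omega> \<subseteq> {1..n} \<and> enat (card \<Omega>) \<le> d \<and>
               sum c {1..n} = sum c \<Omega>))}"

definition large_D :: "'a::comm_monoid_add set \<Rightarrow> enat" where
  "large_D C = Inf {l :: enat. l \<ge> 1 \<and> (\<forall>n::nat. enat n \<ge> l \<longrightarrow>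
      (\<forall>c :: nat \<Rightarrow> 'a. (\<forall>\<nu>\<in>{1..n}. c \<nu> \<in> C) \<longrightarrow>
         (\<exists>\<Omega>. \<Omega> \<subset> {1..n} \<and> sum c {1..n} = sum c \<Omega>)))}"

end

theory Submission
  imports Defs
begin

text \<open>
  A sequence of length at least \<open>l\<close> with a proper subsum equal to the total sum can be
  shortened; iterating, every sequence has a subsum of at most \<open>l - 1\<close> terms with the same
  sum, and conversely a subsum of at most \<open>d\<close> terms is proper once the length exceeds \<open>d\<close>. In a finite monoid, among the
  \<open>n + 1\<close> partial sums \<open>s\<^sub>0, \<dots>, s\<^sub>n\<close> of a sequence of length \<open>n \<ge> |C|\<close> two agree,
  \<open>s\<^sub>a = s\<^sub>b\<close> with \<open>a < b\<close>, and dropping the terms \<open>a+1, \<dots>, b\<close> leaves the sum unchanged;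
  so \<open>D \<le> |C|\<close>.
\<close>

definition proper_subsum_bound :: "'a::comm_monoid_add set \<Rightarrow> enat \<Rightarrow> bool" where
  "proper_subsum_bound C l \<longleftrightarrow> (\<forall>n::nat. enat n \<ge> l \<longrightarrow>
      (\<forall>c :: nat \<Rightarrow> 'a. (\<forall>\<nu>\<in>{1..n}. c \<nu> \<in> C) \<longrightarrow>
         (\<exists>\<Omega>. \<Omega> \<subset> {1..n} \<and> sum c {1..n} = sum c \<Omega>)))"

definition short_subsum_bound :: "'a::comm_monoid_add set \<Rightarrow> enat \<Rightarrow> bool" where
  "short_subsum_bound C d \<longleftrightarrow> (\<forall>n::nat. n \<ge> 1 \<longrightarrow>
      (\<forall>c :: nat \<Rightarrow> 'a. (\<forall>\<nu>\<in>{1..n}. c \<nu> \<in> C) \<longrightarrow>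
         (\<exists>\<Omega>. \<Omega> \<subseteq> {1..n} \<and> enat (card \<Omega>) \<le> d \<and> sum c {1..n} = sum c \<Omega>)))"

lemma proper_subsum_bound_ge_1:
  assumes "proper_subsum_bound C l"
  shows "l \<ge> 1"
proof (rule ccontr)
  assume "\<not> l \<ge> 1"
  hence "enat 0 \<ge> l" by (cases l) (auto simp: one_enat_def)
  from assms[unfolded proper_subsum_bound_def, rule_format, OF this, of "\<lambda>_. 0"]
  show False by simp
qed

lemma large_D_eq_Inf_proper_subsum_bound:
  "large_D C = Inf {l. proper_subsum_bound C l}"
proof -
  have "{l. l \<ge> 1 \<and> proper_subsum_bound C l} = {l. proper_subsum_bound C l}"
    using proper_subsum_bound_ge_1 by blast
  moreover have "large_D C = Inf {l. l \<ge> 1 \<and> proper_subsum_bound C l}"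
    unfolding large_D_def proper_subsum_bound_def ..
  ultimately show ?thesis by simp
qed

lemma small_d_eq_Inf_short_subsum_bound:
  "small_d C = Inf {d. short_subsum_bound C d}"
  unfolding small_d_def short_subsum_bound_def ..

lemma proper_subsum_bound_infinity: "proper_subsum_bound C \<infinity>"
  unfolding proper_subsum_bound_def by simp

lemma proper_subsum_bound_large_D: "proper_subsum_bound C (large_D C)"
proof -
  have "Inf {x. proper_subsum_bound C x} \<in> {x. proper_subsum_bound C x}"
    using proper_subsum_bound_infinity by (intro wellorder_InfI[of \<infinity>]) simp
  thus ?thesis unfolding large_D_eq_Inf_proper_subsum_bound by simp
qed

lemma short_subsum_bound_infinity: "short_subsum_bound C \<infinity>"
  unfolding short_subsum_bound_def
proof (intro allI impI)
  fix n :: nat and c :: "nat \<Rightarrow> 'a"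
  show "\<exists>\<Omega>. \<Omega> \<subseteq> {1..n} \<and> enat (card \<Omega>) \<le> \<infinity> \<and> sum c {1..n} = sum c \<Omega>"
    by (intro exI[of _ "{1..n}"]) simp
qed

lemma short_subsum_bound_small_d: "short_subsum_bound C (small_d C)"
proof -
  have "Inf {x. short_subsum_bound C x} \<in> {x. short_subsum_bound C x}"
    using short_subsum_bound_infinity by (intro wellorder_InfI[of \<infinity>]) simp
  thus ?thesis unfolding small_d_eq_Inf_short_subsum_bound by simp
qed

lemma proper_subsum_bound_if_short_subsum_bound:
  assumes "short_subsum_bound C d"
  shows "proper_subsum_bound C (d + 1)"
  unfolding proper_subsum_bound_def
proof (intro allI impI)
  fix n :: nat and c :: "nat \<Rightarrow> 'a"
  assume n: "enat n \<ge> d + 1" and c: "\<forall>\<nu>\<in>{1..n}. c \<nu> \<in> C"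
  obtain d' where d': "d = enat d'" "d' < n"
    using n by (cases d) (simp_all add: one_enat_def)
  then obtain \<Omega> where \<Omega>: "\<Omega> \<subseteq> {1..n}" "card \<Omega> \<le> d'" "sum c {1..n} = sum c \<Omega>"
    using assms[unfolded short_subsum_bound_def, rule_format, of n c] c by auto
  have "\<Omega> \<noteq> {1..n}" using \<Omega>(2) d'(2) by auto
  with \<Omega> show "\<exists>\<Omega>. \<Omega> \<subset> {1..n} \<and> sum c {1..n} = sum c \<Omega>" by blast
qed

lemma subsum_card_less_if_proper_subsum_bound:
  assumes bound: "proper_subsum_bound C (enat l)"
    and "finite I" and "c ` I \<subseteq> C"
  shows "\<exists>J\<subseteq>I. card J < l \<and> sum c I = sum c J"
  using assms(2,3)
proof (induction "card I" arbitrary: I rule: less_induct)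
  case less
  show ?case
  proof (cases "card I < l")
    case True
    thus ?thesis by blast
  next
    case False
    obtain h where h: "bij_betw h {1..card I} I"
      using ex_bij_betw_nat_finite_1[OF less.prems(1)] by blast
    have "\<forall>\<nu>\<in>{1..card I}. (c \<circ> h) \<nu> \<in> C"
      using bij_betw_apply[OF h] less.prems(2) by auto
    moreover have "enat (card I) \<ge> enat l"
      using False by simp
    ultimately obtain \<Omega> where \<Omega>: "\<Omega> \<subset> {1..card I}" "sum (c \<circ> h) {1..card I} = sum (c \<circ> h) \<Omega>"
      using bound[unfolded proper_subsum_bound_def, rule_format, of "card I" "c \<circ> h"] by blast
    have inj: "inj_on h \<Omega>"
      using inj_on_subset[OF bij_betw_imp_inj_on[OF h]] \<Omega>(1) by blast
    have sub: "h ` \<Omega> \<subseteq> I"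
      using bij_betw_imp_surj_on[OF h] \<Omega>(1) by blast
    have "sum c I = sum (c \<circ> h) {1..card I}"
      using sum.reindex_bij_betw[OF h, of c] by (simp add: comp_def)
    also have "\<dots> = sum c (h ` \<Omega>)"
      using \<Omega>(2) sum.reindex[OF inj, of c] by simp
    finally have sum_eq: "sum c I = sum c (h ` \<Omega>)" .
    have "card (h ` \<Omega>) < card I"
      using psubset_card_mono[OF _ \<Omega>(1)] by (simp add: card_image[OF inj])
    moreover have "finite (h ` \<Omega>)"
      using less.prems(1) sub finite_subset by blast
    moreover have "c ` h ` \<Omega> \<subseteq> C"
      using sub less.prems(2) by blast
    ultimately have "\<exists>J\<subseteq>h ` \<Omega>. card J < l \<and> sum c (h ` \<Omega>) = sum c J"
      by (rule less.hyps)
    then obtain J where J: "J \<subseteq> h ` \<Omega>" "card J < l" "sum c (h ` \<Omega>) = sum c J"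
      by auto
    have "J \<subseteq> I"
      using J(1) sub by (rule subset_trans)
    with J(2,3) sum_eq show ?thesis by (intro exI[of _ J]) simp
  qed
qed

lemma short_subsum_bound_if_proper_subsum_bound:
  assumes "proper_subsum_bound C l"
  shows "short_subsum_bound C (l - 1)"
proof (cases l)
  case (enat l')
  show ?thesis unfolding short_subsum_bound_def
  proof (intro allI impI)
    fix n :: nat and c :: "nat \<Rightarrow> 'a"
    assume "\<forall>\<nu>\<in>{1..n}. c \<nu> \<in> C"
    hence "c ` {1..n} \<subseteq> C" by blast
    then obtain J where "J \<subseteq> {1..n}" "card J < l'" "sum c {1..n} = sum c J"
      using subsum_card_less_if_proper_subsum_bound[of C l' "{1..n}" c] assms enat by auto
    thus "\<exists>\<Omega>. \<Omega> \<subseteq> {1..n} \<and> enat (card \<Omega>) \<le> l - 1 \<and> sum c {1..n} = sum c \<Omega>"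
      using enat by (intro exI[of _ J]) (simp add: one_enat_def)
  qed
next
  case infinity
  thus ?thesis using short_subsum_bound_infinity by simp
qed

theorem large_D_eq_small_d_plus_1:
  "large_D C = small_d C + 1"
proof (rule antisym)
  show "large_D C \<le> small_d C + 1"
    unfolding large_D_eq_Inf_proper_subsum_bound
    using proper_subsum_bound_if_short_subsum_bound[OF short_subsum_bound_small_d]
    by (intro Inf_lower) simp
  have "small_d C \<le> large_D C - 1"
    unfolding small_d_eq_Inf_short_subsum_bound
    using short_subsum_bound_if_proper_subsum_bound[OF proper_subsum_bound_large_D]
    by (intro Inf_lower) simp
  moreover have "large_D C \<ge> 1"
    by (rule proper_subsum_bound_ge_1[OF proper_subsum_bound_large_D])
  ultimately show "small_d C + 1 \<le> large_D C"
    by (cases "large_D C"; cases "small_d C") (auto simp: one_enat_def)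
qed

lemma sum_eq_sum_proper_subset_if_length_ge_card:
  fixes c :: "nat \<Rightarrow> 'a::{comm_monoid_add, finite}"
  assumes "n \<ge> card (UNIV::'a set)"
  shows "\<exists>\<Omega>. \<Omega> \<subset> {1..n} \<and> sum c {1..n} = sum c \<Omega>"
proof -
  define s where "s k = sum c {1..k}" for k
  have "\<not> inj_on s {0..n}"
  proof
    assume "inj_on s {0..n}"
    hence "card (s ` {0..n}) = n + 1" by (simp add: card_image)
    moreover have "card (s ` {0..n}) \<le> card (UNIV::'a set)" by (rule card_mono) auto
    ultimately show False using assms by simp
  qed
  then obtain a b where ab: "a < b" "b \<le> n" "s a = s b"
    unfolding inj_on_def by (metis atLeastAtMost_iff linorder_neqE_nat)
  define \<Omega> where "\<Omega> = {1..a} \<union> {b+1..n}"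
  have "b \<notin> \<Omega>" "b \<in> {1..n}" "\<Omega> \<subseteq> {1..n}"
    using ab unfolding \<Omega>_def by auto
  hence "\<Omega> \<subset> {1..n}" by blast
  moreover have "sum c {1..n} = s b + sum c {b+1..n}"
    unfolding s_def using ab
    by (subst sum.union_disjoint[symmetric]) (auto intro: arg_cong[where f="sum c"])
  moreover have "s a + sum c {b+1..n} = sum c \<Omega>"
    unfolding s_def \<Omega>_def using ab by (subst sum.union_disjoint) auto
  ultimately show ?thesis using ab(3) by metis
qed

lemma large_D_le_card:
  "large_D (UNIV :: 'a::{comm_monoid_add, finite} set) \<le> enat (card (UNIV :: 'a set))"
proof -
  have "proper_subsum_bound (UNIV :: 'a set) (enat (card (UNIV :: 'a set)))"
    unfolding proper_subsum_bound_def using sum_eq_sum_proper_subset_if_length_ge_card by auto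
  thus ?thesis unfolding large_D_eq_Inf_proper_subsum_bound by (intro Inf_lower) simp
qed

theorem lemma5p10:
  fixes C :: "'a::{comm_monoid_add, finite} set"
  assumes "C = UNIV"
  shows "large_D C = small_d C + 1 \<and> small_d C + 1 \<le> enat (card C)"
  using large_D_eq_small_d_plus_1[of C] large_D_le_card[where 'a = 'a] assms by simp

end
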